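(* Let $(\lambda,u)\in\mathbb{R}\times\Sigma_1$ be fixed and define $\mathcal{F}\phi:=\phi-S\big((\mathcal{A}(0)-\mathcal{A}(u))\phi,\lambda\ell(u)\phi\big)$ for $\phi\in\mathbb{E}_1$. Then $\mathcal{F}\in\mathcal{L}(\mathbb{E}_1)$ is a Fredholm operator of index zero. More precisely, $\ker(\mathcal{F})=\{T[u](0,w): w\in\ker(1-\lambda Q(u))\}$ and $\mathrm{rg}(\mathcal{F})=\{h\in\mathbb{E}_1: h(0)+\lambda\ell(u)T[u](\partial_ah+\mathcal{A}(0)h,0)\in\mathrm{rg}(1-\lambda Q(u))\}$, with $\dim\ker(\mathcal{F})=\mathrm{codim}\,\mathrm{rg}(\mathcal{F})=\dim\ker(1-\lambda Q(u))<\infty$, where $1-\lambda Q(u)$ is regarded as an operator on $E_\varsigma$.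
   Context: $E_0$ is a real Banach space ordered by a closed convex cone $E_0^+$, $E_1$ a Banach space densely and compactly embedded in $E_0$. Fix $p\in(1,\infty)$, $\varsigma:=1-1/p$, $E_\varsigma:=(E_0,E_1)_{\varsigma,p}$ (real interpolation); for $\theta\in(0,1)\setminus\{\varsigma\}$, $E_\theta:=(E_0,E_1)_\theta$ with an admissible interpolation functor ($E_1$ dense in $E_\theta$), $E_\theta^+:=E_\theta\cap E_0^+$, and $\mathrm{int}(E_\varsigma^+)\neq\emptyset$. $a_m\in(0,\infty]$, $J:=[0,a_m)$, $\mathbb{E}_0:=L_p(J,E_0)$, $\mathbb{E}_1:=L_p(J,E_1)\cap W^1_p(J,E_0)$, $\gamma_0u:=u(0)$, $\gamma_0\in\mathcal{L}(\mathbb{E}_1,E_\varsigma)$ (since $\mathbb{E}_1\hookrightarrow BUC(J,E_\varsigma)$), $\mathbb{E}_1^+:=L_p^+(J,E_1)\cap W_p^1(J,E_0)$. $\mathbb{F}$ is a Banach space with $\mathbb{E}_1$ compactly embedded in $\mathbb{F}$, $\Sigma$ an open connected $0$-neighbourhood in $\mathbb{F}$, $\Sigma_1:=\Sigma\cap\mathbb{E}_1$. For some $\vartheta\in(\varsigma,1]$: $\mathcal{A}\in C^1(\Sigma,\mathcal{L}(\mathbb{E}_1,\mathbb{E}_0))$, $\ell\in C^1(\Sigma,\mathcal{L}(\mathbb{E}_1,E_\vartheta))$. Standing assumptions: for all $u\in\Sigma_1$, $(\partial_a+\mathcal{A}(u),\gamma_0)\in\mathrm{Isom}(\mathbb{E}_1,\mathbb{E}_0\times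 E_\varsigma)$, with inverse $T[u]\in\mathcal{L}(\mathbb{E}_0\times E_\varsigma,\mathbb{E}_1)$, and $T[u](0,\cdot)$ maps $E_\varsigma^+$ into $\mathbb{E}_1^+$; $Q(u):=\ell(u)T[u](0,\cdot)$, which is a compact operator on $E_\varsigma$; $\lambda_0^{-1}>0$ is a simple eigenvalue of $Q(0)$ with an eigenvector $\Phi_0\in\mathrm{int}(E_\varsigma^+)$, and $Q(0)$ has no other eigenvalue with an eigenvector in $E_\varsigma^+$. $S:=T[0]$. *)

theory Defs
  imports "HOL-Analysis.Analysis"
begin

definition fin_dim :: "'a::real_vector set \<Rightarrow> bool" where
  "fin_dim V \<longleftrightarrow> (\<exists>B. finite B \<and> V \<subseteq> span B)"

definition ker :: "('a \<Rightarrow> 'b::zero) \<Rightarrow> 'a set" where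
  "ker F = {x. F x = 0}"

definition has_codim :: "'a::real_vector set \<Rightarrow> nat \<Rightarrow> bool" where
  "has_codim V n \<longleftrightarrow> subspace V \<and> (\<exists>C. subspace C \<and> fin_dim C \<and> dim C = n \<and>
      V \<inter> C = {0} \<and> (\<forall>x. \<exists>v\<in>V. \<exists>c\<in>C. x = v + c))"

definition fredholm_index0 :: "('a::banach \<Rightarrow> 'b::banach) \<Rightarrow> bool" where
  "fredholm_index0 F \<longleftrightarrow> bounded_linear F \<and> fin_dim (ker F) \<and> closed (range F) \<and>
      has_codim (range F) (dim (ker F))"

definition compact_operator :: "('a::real_normed_vector \<Rightarrow> 'b::real_normed_vector) \<Rightarrow> bool" where
  "compact_operator K \<longleftrightarrow> bounded_linear K \<and> (\<forall>B. bounded B \<longrightarrow> compact (closure (K ` B)))"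

definition C1_on :: "'a::real_normed_vector set \<Rightarrow> ('a \<Rightarrow> 'b::real_normed_vector) \<Rightarrow> bool" where
  "C1_on S f \<longleftrightarrow> (\<exists>D::'a \<Rightarrow> ('a \<Rightarrow>\<^sub>L 'b).
      (\<forall>x\<in>S. (f has_derivative blinfun_apply (D x)) (at x)) \<and> continuous_on S D)"

text \<open>The solution operator T[u], the inverse of (d_a + A(u), gamma_0) : E1 -> E0 x E_sigma.
  Here Da is d_a, A u is A(u) (u already in the ambient space F), g0 is gamma_0.\<close>
definition Tsol :: "('e1 \<Rightarrow>\<^sub>L 'e0::real_normed_vector) \<Rightarrow> ('e1::real_normed_vector \<Rightarrow>\<^sub>L 'es::real_normed_vector)
      \<Rightarrow> ('e1 \<Rightarrow>\<^sub>L 'e0) \<Rightarrow> ('e0 \<times> 'es \<Rightarrow> 'e1)" where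
  "Tsol Da g0 Au = inv (\<lambda>\<phi>. (Da \<phi> + Au \<phi>, g0 \<phi>))"

text \<open>Q(u) w = l(u) T[u](0,w), viewed in E_sigma via the embedding j : E_theta -> E_sigma.\<close>
definition Qop :: "('ev::real_normed_vector \<Rightarrow>\<^sub>L 'es::real_normed_vector) \<Rightarrow> ('e1 \<Rightarrow>\<^sub>L 'e0::real_normed_vector)
      \<Rightarrow> ('e1::real_normed_vector \<Rightarrow>\<^sub>L 'es) \<Rightarrow> ('e1 \<Rightarrow>\<^sub>L 'e0) \<Rightarrow> ('e1 \<Rightarrow>\<^sub>L 'ev) \<Rightarrow> 'es \<Rightarrow> 'es" where
  "Qop j Da g0 Au lu w = j (lu (Tsol Da g0 Au (0, w)))"

end

theory Submission
  imports Defs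
begin

text \<open>
  With \<open>T\<^sub>0 = T[0]\<close>, \<open>T\<^sub>u = T[u]\<close> and \<open>B = \<lambda> l(u)\<close>, a fixed point of
  \<open>\<phi> \<mapsto> T\<^sub>0((\<A>(0) - \<A>(u))\<phi>, B\<phi>)\<close> is a solution of \<open>\<partial>\<^sub>a\<phi> + \<A>(u)\<phi> = 0\<close> whose initial value \<open>w\<close>
  satisfies \<open>w = B T\<^sub>u(0, w) = \<lambda>Q(u)w\<close>; dually, the range of \<open>\<F>\<close> is the preimage of
  \<open>rg(1 - \<lambda>Q(u))\<close> under a bounded linear map with a linear right inverse \<open>w \<mapsto> T\<^sub>0(0, w)\<close>.
  Since \<open>Q(u)\<close> factors through the compact embedding \<open>E\<^sub>\<theta> \<hookrightarrow> E\<^sub>\<sigma>\<close>, it is compact, and the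
  Riesz-Schauder theory of \<open>1 - \<lambda>Q(u)\<close> (finite-dimensional kernel, closed range of codimension
  equal to the dimension of the kernel) transfers to \<open>\<F>\<close>. The index statement of Riesz-Schauder
  theory is obtained from finiteness of ascent and descent (via the Riesz lemma) and the
  decomposition \<open>X = ker (I - K)\<^sup>m \<oplus> rg (I - K)\<^sup>m\<close>, on which rank-nullity applies.
\<close>

section \<open>Finite-dimensional linear algebra\<close>

lemma mem_ker [simp]: "x \<in> ker F \<longleftrightarrow> F x = 0"
  by (simp add: ker_def)

lemma subspace_ker: "linear F \<Longrightarrow> subspace (ker F)"
  unfolding ker_def by (rule linear_subspace_kernel)

lemma closed_ker:
  assumes "bounded_linear F" shows "closed (ker F)"
  unfolding ker_def
  by (rule closed_Collect_eq[OF linear_continuous_on[OF assms] continuous_on_const])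

lemma subspace_range: "linear F \<Longrightarrow> subspace (range F)"
  by (rule linear_subspace_image[OF _ subspace_UNIV])

lemma linear_funpow:
  fixes T :: "'a::real_vector \<Rightarrow> 'a"
  assumes "linear T" shows "linear (T ^^ n)"
  using assms by (induction n) (simp_all add: real_vector.linear_id linear_compose)

lemma fin_dim_linear_image:
  assumes "linear f" "fin_dim V" shows "fin_dim (f ` V)"
proof -
  obtain B where B: "finite B" "V \<subseteq> span B" using assms(2) unfolding fin_dim_def by auto
  have "f ` V \<subseteq> f ` span B" using B by auto
  also have "\<dots> = span (f ` B)" using span_linear_image[OF assms(1)] by simp
  finally show ?thesis unfolding fin_dim_def using B by blast
qed

lemma finite_independent_in_fin_dim:
  assumes "fin_dim V" "independent B" "B \<subseteq> V" shows "finite B"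
proof -
  obtain F where F: "finite F" "V \<subseteq> span F" using assms(1) unfolding fin_dim_def by auto
  show ?thesis using independent_span_bound[OF F(1) assms(2)] assms(3) F(2) by auto
qed

lemma dim_linear_image_inj_on:
  assumes f: "linear f" and U: "subspace U" and inj: "inj_on f U"
  shows "dim (f ` U) = dim U"
proof -
  obtain B where B: "B \<subseteq> U" "independent B" "U \<subseteq> span B" "card B = dim U"
    using basis_exists by blast
  have span_B: "span B = U" using B span_minimal[OF B(1) U] by auto
  have "independent (f ` B)"
    using linear_independent_injective_image[OF f B(2)] inj span_B by simp
  moreover have "f ` U \<subseteq> span (f ` B)" using span_linear_image[OF f, of B] span_B by simp
  moreover have "card (f ` B) = dim U"
    using card_image inj_on_subset[OF inj B(1)] B(4) by metis
  ultimately show ?thesis using dim_unique[of "f ` B" "f ` U"] B(1) by blast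
qed

lemma independent_span_Diff_disjoint:
  assumes ind: "independent B" and fin: "finite B" and sub: "B0 \<subseteq> B"
    and x: "x \<in> span B0" "x \<in> span (B - B0)"
  shows "x = 0"
proof -
  have fin0: "finite B0" "finite (B - B0)" using fin sub finite_subset by auto
  obtain u where u: "x = (\<Sum>v\<in>B0. u v *\<^sub>R v)" using x(1) span_finite[OF fin0(1)] by auto
  obtain w where w: "x = (\<Sum>v\<in>B - B0. w v *\<^sub>R v)" using x(2) span_finite[OF fin0(2)] by auto
  define c where "c v = (if v \<in> B0 then u v else - w v)" for v
  have "(\<Sum>v\<in>B. c v *\<^sub>R v) = (\<Sum>v\<in>B0. c v *\<^sub>R v) + (\<Sum>v\<in>B - B0. c v *\<^sub>R v)"
    using sum.subset_diff[OF sub fin] by (simp add: add.commute)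
  also have "(\<Sum>v\<in>B0. c v *\<^sub>R v) = x" using u by (simp add: c_def)
  also have "(\<Sum>v\<in>B - B0. c v *\<^sub>R v) = - x" using w by (simp add: c_def sum_negf)
  finally have "(\<Sum>v\<in>B. c v *\<^sub>R v) = 0" by simp
  then have "\<forall>v\<in>B. c v = 0" using ind fin unfolding independent_explicit_finite_subsets by blast
  then have "\<forall>v\<in>B0. u v = 0" using sub unfolding c_def by (metis (full_types) subsetD)
  then show ?thesis using u by simp
qed

lemma subspace_complement_exists:
  assumes W: "subspace W" and V: "subspace V" and WV: "W \<subseteq> V" and fd: "fin_dim V"
  obtains C where "subspace C" "fin_dim C" "C \<subseteq> V" "W \<inter> C = {0}"
    "\<forall>x\<in>V. \<exists>w\<in>W. \<exists>c\<in>C. x = w + c" "dim V = dim W + dim C"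
proof -
  obtain B0 where B0: "B0 \<subseteq> W" "independent B0" "W \<subseteq> span B0" "card B0 = dim W"
    using basis_exists by blast
  obtain B where B: "B0 \<subseteq> B" "B \<subseteq> V" "independent B" "V \<subseteq> span B"
    using maximal_independent_subset_extend[of B0 V] B0 WV by blast
  have fin: "finite B" using finite_independent_in_fin_dim[OF fd B(3) B(2)] .
  have span_B0: "span B0 = W" using B0 span_minimal[OF B0(1) W] by auto
  define C where "C = span (B - B0)"
  have "subspace C" "fin_dim C" unfolding C_def fin_dim_def using fin by auto
  moreover have "C \<subseteq> V" unfolding C_def using span_minimal[OF _ V] B(2) by blast
  moreover have "W \<inter> C = {0}"
    using independent_span_Diff_disjoint[OF B(3) fin B(1)] span_B0 span_zero[of B0]
      span_zero[of "B - B0"] unfolding C_def by blast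
  moreover have "\<forall>x\<in>V. \<exists>w\<in>W. \<exists>c\<in>C. x = w + c"
  proof
    fix x assume "x \<in> V"
    then have "x \<in> span (B0 \<union> (B - B0))" using B by (metis Un_Diff_cancel sup.absorb2 subsetD)
    then show "\<exists>w\<in>W. \<exists>c\<in>C. x = w + c" unfolding span_Un span_B0 C_def by blast
  qed
  moreover have "dim V = dim W + dim C"
  proof -
    have "card B = card B0 + card (B - B0)"
      using card_Diff_subset[OF finite_subset[OF B(1) fin] B(1)] card_mono[OF fin B(1)] by simp
    then show ?thesis
      using basis_card_eq_dim[OF B(2) B(4) B(3)] B0(4) dim_span_eq_card_independent[of "B - B0"]
        independent_mono[OF B(3)] unfolding C_def by auto
  qed
  ultimately show ?thesis using that by blast
qed

lemma rank_nullity_subspace: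
  assumes f: "linear f" and V: "subspace V" and fd: "fin_dim V"
  shows "dim V = dim (V \<inter> ker f) + dim (f ` V)"
proof -
  have "subspace (V \<inter> ker f)" using V subspace_ker[OF f] by (simp add: subspace_inter)
  then obtain U where U: "subspace U" "U \<subseteq> V" "(V \<inter> ker f) \<inter> U = {0}"
    "\<forall>x\<in>V. \<exists>w\<in>V \<inter> ker f. \<exists>c\<in>U. x = w + c" "dim V = dim (V \<inter> ker f) + dim U"
    using subspace_complement_exists[OF _ V Int_lower1 fd] by metis
  have "f ` V \<subseteq> f ` U"
  proof
    fix y assume "y \<in> f ` V"
    then obtain x where x: "x \<in> V" "y = f x" by auto
    obtain w c where "w \<in> V \<inter> ker f" "c \<in> U" "x = w + c" using U(4) x by blast
    then show "y \<in> f ` U" using x linear_add[OF f] by auto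
  qed
  then have image: "f ` V = f ` U" using U(2) by auto
  have "inj_on f U"
  proof (rule inj_onI)
    fix a b assume ab: "a \<in> U" "b \<in> U" "f a = f b"
    then have "a - b \<in> (V \<inter> ker f) \<inter> U"
      using U(1,2) linear_diff[OF f] by (auto simp: subspace_diff)
    then show "a = b" using U(3) by auto
  qed
  then show ?thesis using U(5) image dim_linear_image_inj_on[OF f U(1)] by simp
qed

lemma has_codim_linear_vimage:
  assumes Phi: "linear Phi" and L: "linear L" and right_inverse: "\<And>w. Phi (L w) = w"
    and V: "has_codim V n"
  shows "has_codim (Phi -` V) n"
proof -
  obtain C' where C': "subspace C'" "fin_dim C'" "dim C' = n" "V \<inter> C' = {0}"
    "\<forall>x. \<exists>v\<in>V. \<exists>c\<in>C'. x = v + c" and subspace_V: "subspace V"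
    using V unfolding has_codim_def by blast
  have "subspace (Phi -` V)" using linear_subspace_vimage[OF Phi subspace_V] .
  moreover have "subspace (L ` C')" using linear_subspace_image[OF L C'(1)] .
  moreover have "fin_dim (L ` C')" using fin_dim_linear_image[OF L C'(2)] .
  moreover have "dim (L ` C') = n"
    using dim_linear_image_inj_on[OF L C'(1)] C'(3) right_inverse by (metis inj_onI)
  moreover have "Phi -` V \<inter> L ` C' = {0}"
    using C'(1,4) subspace_V linear_0[OF L] linear_0[OF Phi] right_inverse
    by (auto simp: subspace_0) (metis IntI empty_iff insert_iff)
  moreover have "\<forall>x. \<exists>v\<in>Phi -` V. \<exists>c\<in>L ` C'. x = v + c"
  proof
    fix x
    obtain v c where vc: "v \<in> V" "c \<in> C'" "Phi x = v + c" using C'(5) by blast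
    have "Phi (x - L c) = v" using vc(3) right_inverse linear_diff[OF Phi] by simp
    then show "\<exists>v\<in>Phi -` V. \<exists>c\<in>L ` C'. x = v + c"
      using vc by (metis diff_add_cancel image_eqI vimageI2)
  qed
  ultimately show ?thesis unfolding has_codim_def by blast
qed

section \<open>Sequentially compact operators\<close>

text \<open>A sequential variant of \<open>compact_operator\<close>; it is evidently closed under sums and
  compositions, which is what the powers of \<open>I - K\<close> require.\<close>
definition seq_compact_operator :: "('a::real_normed_vector \<Rightarrow> 'b::real_normed_vector) \<Rightarrow> bool" where
  "seq_compact_operator K \<longleftrightarrow> bounded_linear K \<and> (\<forall>x::nat \<Rightarrow> 'a. bounded (range x) \<longrightarrow>
      (\<exists>r l. strict_mono r \<and> (\<lambda>n. K (x (r n))) \<longlonglongrightarrow> l))"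

lemma seq_compact_operatorD:
  "seq_compact_operator K \<Longrightarrow> bounded (range (x :: nat \<Rightarrow> _)) \<Longrightarrow>
    \<exists>r l. strict_mono r \<and> (\<lambda>n. K (x (r n))) \<longlonglongrightarrow> l"
  unfolding seq_compact_operator_def by blast

lemma seq_compact_operator_imp_bounded_linear:
  "seq_compact_operator K \<Longrightarrow> bounded_linear K"
  unfolding seq_compact_operator_def by blast

lemma bounded_linear_id_minus_seq_compact_operator:
  "seq_compact_operator K \<Longrightarrow> bounded_linear (\<lambda>x. x - K x)"
  by (intro bounded_linear_sub bounded_linear_ident seq_compact_operator_imp_bounded_linear)

lemma compact_operator_imp_seq_compact_operator:
  assumes "compact_operator K" shows "seq_compact_operator K"
  unfolding seq_compact_operator_def
proof (intro conjI allI impI)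
  show "bounded_linear K" using assms unfolding compact_operator_def by blast
  fix x :: "nat \<Rightarrow> 'a" assume "bounded (range x)"
  then have "compact (closure (K ` range x))" using assms unfolding compact_operator_def by blast
  moreover have "\<forall>n. (K \<circ> x) n \<in> closure (K ` range x)"
    by (metis closure_subset image_subset_iff rangeI o_apply)
  ultimately obtain l r where "strict_mono r" "((K \<circ> x) \<circ> r) \<longlonglongrightarrow> l"
    unfolding compact_eq_seq_compact_metric by (metis seq_compactE)
  then show "\<exists>r l. strict_mono r \<and> (\<lambda>n. K (x (r n))) \<longlonglongrightarrow> l" by (auto simp: o_def)
qed

lemma seq_compact_operator_compose_right:
  assumes K: "seq_compact_operator K" and L: "bounded_linear L"
  shows "seq_compact_operator (\<lambda>x. K (L x))"
  unfolding seq_compact_operator_def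
proof (intro conjI allI impI)
  show "bounded_linear (\<lambda>x. K (L x))"
    using bounded_linear_compose[OF seq_compact_operator_imp_bounded_linear[OF K] L] .
  fix x :: "nat \<Rightarrow> 'c" assume "bounded (range x)"
  then have "bounded (range (\<lambda>n. L (x n)))"
    using bounded_linear_image[OF _ L, of "range x"] by (simp add: image_image)
  from seq_compact_operatorD[OF K this]
  show "\<exists>r l. strict_mono r \<and> (\<lambda>n. K (L (x (r n)))) \<longlonglongrightarrow> l" .
qed

lemma seq_compact_operator_compose_left:
  assumes K: "seq_compact_operator K" and L: "bounded_linear L"
  shows "seq_compact_operator (\<lambda>x. L (K x))"
  unfolding seq_compact_operator_def
proof (intro conjI allI impI)
  show "bounded_linear (\<lambda>x. L (K x))"
    using bounded_linear_compose[OF L seq_compact_operator_imp_bounded_linear[OF K]] .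
  fix x :: "nat \<Rightarrow> 'a" assume "bounded (range x)"
  from seq_compact_operatorD[OF K this] obtain r l
    where "strict_mono r" "(\<lambda>n. K (x (r n))) \<longlonglongrightarrow> l" by blast
  then show "\<exists>r l. strict_mono r \<and> (\<lambda>n. L (K (x (r n)))) \<longlonglongrightarrow> l"
    using bounded_linear.tendsto[OF L] by blast
qed

lemma seq_compact_operator_add:
  assumes K1: "seq_compact_operator K1" and K2: "seq_compact_operator K2"
  shows "seq_compact_operator (\<lambda>x. K1 x + K2 x)"
  unfolding seq_compact_operator_def
proof (intro conjI allI impI)
  show "bounded_linear (\<lambda>x. K1 x + K2 x)"
    using K1 K2 by (intro bounded_linear_add seq_compact_operator_imp_bounded_linear)
  fix x :: "nat \<Rightarrow> 'a" assume x: "bounded (range x)"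
  from seq_compact_operatorD[OF K1 x] obtain r1 l1
    where r1: "strict_mono r1" "(\<lambda>n. K1 (x (r1 n))) \<longlonglongrightarrow> l1" by blast
  have "bounded (range (\<lambda>n. x (r1 n)))" by (rule bounded_subset[OF x]) auto
  from seq_compact_operatorD[OF K2 this] obtain r2 l2
    where r2: "strict_mono r2" "(\<lambda>n. K2 (x (r1 (r2 n)))) \<longlonglongrightarrow> l2" by blast
  have "(\<lambda>n. K1 (x (r1 (r2 n)))) \<longlonglongrightarrow> l1"
    using LIMSEQ_subseq_LIMSEQ[OF r1(2) r2(1)] by (simp add: o_def)
  then have "(\<lambda>n. K1 (x (r1 (r2 n))) + K2 (x (r1 (r2 n)))) \<longlonglongrightarrow> l1 + l2"
    using r2(2) by (rule tendsto_add)
  moreover have "strict_mono (r1 \<circ> r2)" using strict_mono_o[OF r1(1) r2(1)] .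
  ultimately show "\<exists>r l. strict_mono r \<and> (\<lambda>n. K1 (x (r n)) + K2 (x (r n))) \<longlonglongrightarrow> l"
    by (auto simp: o_def)
qed

lemma seq_compact_operator_zero: "seq_compact_operator (\<lambda>x. 0)"
  unfolding seq_compact_operator_def by (auto intro: strict_mono_id[unfolded id_def])

text \<open>Powers of \<open>I - K\<close> are again of this form:
  \<open>(I - K)(I - K') = I - (K' + K(I - K'))\<close>.\<close>
lemma funpow_id_minus_seq_compact_operator:
  fixes K :: "'a::real_normed_vector \<Rightarrow> 'a"
  assumes K: "seq_compact_operator K"
  shows "\<exists>K'. seq_compact_operator K' \<and> (\<lambda>x. x - K x) ^^ n = (\<lambda>x. x - K' x)"
proof (induction n)
  case 0
  show ?case using seq_compact_operator_zero by auto
next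
  case (Suc n)
  then obtain K' where K': "seq_compact_operator K'" "(\<lambda>x. x - K x) ^^ n = (\<lambda>x. x - K' x)"
    by blast
  have "seq_compact_operator (\<lambda>x. K' x + K (x - K' x))"
    by (intro seq_compact_operator_add K'(1) seq_compact_operator_compose_right[OF K]
        bounded_linear_id_minus_seq_compact_operator)
  moreover have "(\<lambda>x. x - K x) ^^ Suc n = (\<lambda>x. x - (K' x + K (x - K' x)))"
    by (simp add: K'(2) fun_eq_iff algebra_simps)
  ultimately show ?case by blast
qed

section \<open>Riesz-Schauder theory\<close>

lemma riesz_lemma:
  fixes N :: "'a::real_normed_vector set"
  assumes N: "subspace N" "closed N" and x: "x \<notin> N"
  obtains y0 d where "y0 \<in> N" "d = norm (x - y0)" "0 < d"
    "\<forall>y\<in>N. 1/2 \<le> norm ((1/d) *\<^sub>R (x - y0) - y)"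
proof -
  have ne: "N \<noteq> {}" using subspace_0[OF N(1)] by auto
  define \<delta> where "\<delta> = infdist x N"
  have \<delta>_pos: "0 < \<delta>" unfolding \<delta>_def using infdist_pos_not_in_closed[OF N(2) ne x] .
  have "(INF a\<in>N. dist x a) < 2 * \<delta>" using \<delta>_pos infdist_notempty[OF ne] \<delta>_def by simp
  then obtain y0 where y0: "y0 \<in> N" "dist x y0 < 2 * \<delta>"
    using cINF_less_iff[OF ne bdd_below_image_dist] by blast
  define d where "d = norm (x - y0)"
  have "\<delta> \<le> d" unfolding d_def \<delta>_def using infdist_le[OF y0(1), of x] by (simp add: dist_norm)
  then have d_pos: "0 < d" using \<delta>_pos by simp
  have d_less: "d < 2 * \<delta>" using y0(2) by (simp add: d_def dist_norm)
  have "1/2 \<le> norm ((1/d) *\<^sub>R (x - y0) - y)" if y: "y \<in> N" for y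
  proof -
    have "y0 + d *\<^sub>R y \<in> N" using N(1) y0(1) y by (simp add: subspace_add subspace_scale)
    then have "\<delta> \<le> dist x (y0 + d *\<^sub>R y)" unfolding \<delta>_def by (rule infdist_le)
    also have "\<dots> = norm (x - y0 - d *\<^sub>R y)" by (simp add: dist_norm algebra_simps)
    also have "x - y0 - d *\<^sub>R y = d *\<^sub>R ((1/d) *\<^sub>R (x - y0) - y)"
      using d_pos by (simp add: algebra_simps)
    also have "norm \<dots> = d * norm ((1/d) *\<^sub>R (x - y0) - y)" using d_pos by simp
    finally have "d / 2 \<le> d * norm ((1/d) *\<^sub>R (x - y0) - y)" using d_less by simp
    then show ?thesis using d_pos by (simp add: field_simps)
  qed
  then show ?thesis using that[OF y0(1) d_def d_pos] by blast
qed

lemma closed_span_finite: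
  fixes B :: "'a::real_normed_vector set"
  assumes "finite B" shows "closed (span B)"
  using assms
proof (induction B rule: finite_induct)
  case empty then show ?case by simp
next
  case (insert b B)
  show ?case
  proof (cases "b \<in> span B")
    case True then show ?thesis using insert span_redundant by metis
  next
    case False
    define \<delta> where "\<delta> = infdist b (span B)"
    have \<delta>_pos: "0 < \<delta>"
      unfolding \<delta>_def using infdist_pos_not_in_closed[OF insert(3) _ False] span_zero by blast
    have coeff_bound: "\<bar>t\<bar> * \<delta> \<le> norm (y + t *\<^sub>R b)" if y: "y \<in> span B" for y t
    proof (cases "t = 0")
      case False
      have "- ((1/t) *\<^sub>R y) \<in> span B" using y by (simp add: span_neg span_scale)
      then have "\<delta> \<le> dist b (- ((1/t) *\<^sub>R y))" unfolding \<delta>_def by (rule infdist_le)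
      then have "\<delta> \<le> norm (b + (1/t) *\<^sub>R y)" by (simp add: dist_norm)
      then have "\<bar>t\<bar> * \<delta> \<le> norm (t *\<^sub>R (b + (1/t) *\<^sub>R y))" by (simp add: mult_left_mono)
      also have "t *\<^sub>R (b + (1/t) *\<^sub>R y) = y + t *\<^sub>R b" using False by (simp add: algebra_simps)
      finally show ?thesis .
    qed simp
    show ?thesis unfolding closed_sequential_limits
    proof (intro allI impI, elim conjE)
      fix w l assume w: "\<forall>n. w n \<in> span (insert b B)" and wl: "w \<longlonglongrightarrow> l"
      have "\<forall>n. \<exists>t. w n - t *\<^sub>R b \<in> span B" using w unfolding span_insert by blast
      then obtain t where t: "\<And>n. w n - t n *\<^sub>R b \<in> span B" by metis
      have "Cauchy t"
      proof (rule metric_CauchyI)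
        fix e :: real assume e: "0 < e"
        obtain M where M: "\<And>m n. m \<ge> M \<Longrightarrow> n \<ge> M \<Longrightarrow> dist (w m) (w n) < e * \<delta>"
          using metric_CauchyD[OF LIMSEQ_imp_Cauchy[OF wl], of "e * \<delta>"] e \<delta>_pos by auto
        have "dist (t m) (t n) < e" if "m \<ge> M" "n \<ge> M" for m n
        proof -
          have "(w m - t m *\<^sub>R b) - (w n - t n *\<^sub>R b) \<in> span B" using t by (simp add: span_diff)
          then have "\<bar>t m - t n\<bar> * \<delta> \<le>
              norm (((w m - t m *\<^sub>R b) - (w n - t n *\<^sub>R b)) + (t m - t n) *\<^sub>R b)"
            by (rule coeff_bound)
          also have "\<dots> = dist (w m) (w n)" by (simp add: dist_norm algebra_simps)
          also have "\<dots> < e * \<delta>" using M[OF that] .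
          finally show ?thesis using \<delta>_pos by (simp add: dist_real_def)
        qed
        then show "\<exists>M. \<forall>m\<ge>M. \<forall>n\<ge>M. dist (t m) (t n) < e" by blast
      qed
      then obtain t0 where t0: "t \<longlonglongrightarrow> t0" using Cauchy_convergent_iff convergent_def by blast
      have "(\<lambda>n. w n - t n *\<^sub>R b) \<longlonglongrightarrow> l - t0 *\<^sub>R b" by (intro tendsto_intros wl t0)
      then have "l - t0 *\<^sub>R b \<in> span B"
        by (rule closed_sequentially[OF insert(3), rotated]) (use t in auto)
      then show "l \<in> span (insert b B)" unfolding span_insert by blast
    qed
  qed
qed

lemma seq_compact_operator_no_separated_sequence:
  fixes z :: "nat \<Rightarrow> 'a::real_normed_vector"
  assumes K: "seq_compact_operator K" and z: "\<And>k. norm (z k) = 1"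
    and separated: "\<And>k m. k < m \<Longrightarrow> 1/2 \<le> norm (K (z m) - K (z k))"
  shows False
proof -
  have "bounded (range z)" unfolding bounded_iff using z by auto
  from seq_compact_operatorD[OF K this] obtain r l
    where r: "strict_mono r" "(\<lambda>n. K (z (r n))) \<longlonglongrightarrow> l" by blast
  obtain M where M: "\<And>m n. m \<ge> M \<Longrightarrow> n \<ge> M \<Longrightarrow> dist (K (z (r m))) (K (z (r n))) < 1/2"
    using metric_CauchyD[OF LIMSEQ_imp_Cauchy[OF r(2)], of "1/2"] by auto
  have "r M < r (Suc M)" using r(1) by (simp add: strict_mono_def)
  then have "1/2 \<le> norm (K (z (r (Suc M))) - K (z (r M)))" by (rule separated)
  moreover have "dist (K (z (r (Suc M)))) (K (z (r M))) < 1/2" using M by simp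
  ultimately show False by (simp add: dist_norm)
qed

text \<open>The closed unit ball of \<open>ker (I - K)\<close> is compact, so it is covered by finitely many balls of
  radius \<open>1/2\<close>; by the Riesz lemma their centres span the whole kernel.\<close>
lemma fin_dim_ker_id_minus_seq_compact_operator:
  fixes K :: "'a::real_normed_vector \<Rightarrow> 'a"
  assumes K: "seq_compact_operator K"
  shows "fin_dim (ker (\<lambda>x. x - K x))"
proof -
  define N where "N = ker (\<lambda>x. x - K x)"
  have bl: "bounded_linear (\<lambda>x. x - K x)" by (rule bounded_linear_id_minus_seq_compact_operator[OF K])
  have N: "subspace N" "closed N"
    unfolding N_def using subspace_ker closed_ker bl bounded_linear.linear by blast+
  define S where "S = N \<inter> cball 0 1"
  have compact: "compact S" unfolding compact_eq_seq_compact_metric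
  proof (rule seq_compactI)
    fix f :: "nat \<Rightarrow> 'a" assume f: "\<forall>n. f n \<in> S"
    have "bounded (range f)" using f unfolding S_def bounded_iff by auto
    from seq_compact_operatorD[OF K this] obtain r l
      where r: "strict_mono r" "(\<lambda>n. K (f (r n))) \<longlonglongrightarrow> l" by blast
    have "K (f n) = f n" for n using f unfolding S_def N_def by auto
    then have fr: "(f \<circ> r) \<longlonglongrightarrow> l" using r(2) by (simp add: o_def)
    have "closed S" unfolding S_def using N(2) by (simp add: closed_Int)
    then have "l \<in> S" using closed_sequentially[OF _ _ fr] f by auto
    then show "\<exists>l\<in>S. \<exists>r. strict_mono r \<and> (f \<circ> r) \<longlonglongrightarrow> l" using r(1) fr by blast
  qed
  have cover: "S \<subseteq> (\<Union>c\<in>S. ball c (1/2))" by force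
  obtain C where C: "C \<subseteq> S" "finite C" "S \<subseteq> (\<Union>c\<in>C. ball c (1/2))"
    by (rule compactE_image[OF compact _ cover]) auto
  have closed_span: "closed (span C)" using closed_span_finite[OF C(2)] .
  have span_sub: "span C \<subseteq> N" using span_minimal[OF _ N(1)] C(1) S_def by blast
  have "N \<subseteq> span C"
  proof
    fix x assume x: "x \<in> N"
    show "x \<in> span C"
    proof (rule ccontr)
      assume "x \<notin> span C"
      then obtain y0 d where y0: "y0 \<in> span C" "d = norm (x - y0)" "0 < d"
        and far: "\<forall>y\<in>span C. 1/2 \<le> norm ((1/d) *\<^sub>R (x - y0) - y)"
        by (rule riesz_lemma[OF subspace_span closed_span])
      define z where "z = (1/d) *\<^sub>R (x - y0)"
      have "z \<in> N" unfolding z_def using x y0(1) span_sub N(1)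
        by (simp add: subsetD subspace_diff subspace_scale)
      moreover have "norm z = 1" unfolding z_def using y0(2,3) by simp
      ultimately have "z \<in> S" unfolding S_def by simp
      then obtain c where c: "c \<in> C" "dist c z < 1/2" using C(3) by auto
      have "1/2 \<le> norm (z - c)" using far c(1) span_base unfolding z_def by blast
      then show False using c(2) by (simp add: dist_norm norm_minus_commute)
    qed
  qed
  then show ?thesis unfolding fin_dim_def N_def[symmetric] using C(2) by blast
qed

lemma ker_id_minus_seq_compact_operator_distance_bound:
  fixes K :: "'a::real_normed_vector \<Rightarrow> 'a"
  assumes K: "seq_compact_operator K"
  defines "T \<equiv> \<lambda>x. x - K x"
  shows "\<exists>C. \<forall>x. \<exists>y\<in>ker T. norm (x - y) \<le> C * norm (T x)"
proof (rule ccontr)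
  define N where "N = ker T"
  interpret T: bounded_linear T
    unfolding T_def by (rule bounded_linear_id_minus_seq_compact_operator[OF K])
  have N: "subspace N" "closed N" unfolding N_def using subspace_ker closed_ker T.bounded_linear T.linear by blast+
  assume "\<not> ?thesis"
  then have no_bound: "\<forall>C. \<exists>x. \<forall>y\<in>N. C * norm (T x) < norm (x - y)"
    unfolding N_def by (simp add: not_le)
  text \<open>Normalising the witnesses for \<open>C = n + 1\<close> gives unit vectors far from \<open>N\<close> with \<open>T z \<rightarrow> 0\<close>.\<close>
  have "\<exists>z. norm z = 1 \<and> (\<forall>y\<in>N. 1/2 \<le> norm (z - y)) \<and> norm (T z) \<le> inverse (real (Suc n))" for n
  proof -
    obtain x where x: "\<forall>y\<in>N. real (Suc n) * norm (T x) < norm (x - y)" using no_bound by blast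
    then have "x \<notin> N" by (metis diff_self norm_zero norm_ge_zero mult_nonneg_nonneg of_nat_0_le_iff not_le)
    then obtain y0 d where y0: "y0 \<in> N" "d = norm (x - y0)" "0 < d"
      and far: "\<forall>y\<in>N. 1/2 \<le> norm ((1/d) *\<^sub>R (x - y0) - y)"
      by (rule riesz_lemma[OF N])
    define z where "z = (1/d) *\<^sub>R (x - y0)"
    have "T z = (1/d) *\<^sub>R T x" unfolding z_def using y0(1) by (simp add: N_def T.scaleR T.diff)
    then have "norm (T z) = norm (T x) / d" using y0(3) by simp
    moreover have "real (Suc n) * norm (T x) < d" using x y0 by blast
    then have "norm (T x) / d \<le> inverse (real (Suc n))" using y0(3) by (simp add: field_simps)
    moreover have "norm z = 1" unfolding z_def using y0(2,3) by simp
    ultimately show ?thesis using far z_def by metis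
  qed
  then obtain z where z: "\<And>n. norm (z n) = 1" "\<And>n. \<forall>y\<in>N. 1/2 \<le> norm (z n - y)"
    "\<And>n. norm (T (z n)) \<le> inverse (real (Suc n))" by metis
  have "bounded (range z)" unfolding bounded_iff using z(1) by auto
  from seq_compact_operatorD[OF K this] obtain r l
    where r: "strict_mono r" "(\<lambda>n. K (z (r n))) \<longlonglongrightarrow> l" by blast
  have Tz: "(\<lambda>n. T (z (r n))) \<longlonglongrightarrow> 0"
  proof (rule Lim_null_comparison[OF always_eventually LIMSEQ_inverse_real_of_nat])
    have "inverse (real (Suc (r n))) \<le> inverse (real (Suc n))" for n
      using seq_suble[OF r(1), of n] by (simp add: le_imp_inverse_le)
    then show "\<forall>n. norm (T (z (r n))) \<le> inverse (real (Suc n))" using z(3) order_trans by blast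
  qed
  have "(\<lambda>n. T (z (r n)) + K (z (r n))) \<longlonglongrightarrow> 0 + l" by (intro tendsto_add Tz r(2))
  then have zl: "(\<lambda>n. z (r n)) \<longlonglongrightarrow> l" unfolding T_def by simp
  then have "T l = 0" using LIMSEQ_unique[OF T.tendsto[OF zl] Tz] by simp
  then have "\<And>n. 1/2 \<le> norm (z (r n) - l)" using z(2) unfolding N_def by simp
  moreover obtain M where "\<forall>n\<ge>M. norm (z (r n) - l) < 1/2"
    using zl[unfolded LIMSEQ_iff, rule_format, of "1/2"] by auto
  ultimately show False by (meson le_refl not_le)
qed

lemma closed_range_id_minus_seq_compact_operator:
  fixes K :: "'a::real_normed_vector \<Rightarrow> 'a"
  assumes K: "seq_compact_operator K"
  shows "closed (range (\<lambda>x. x - K x))"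
proof -
  define T where "T = (\<lambda>x. x - K x)"
  interpret T: bounded_linear T
    unfolding T_def by (rule bounded_linear_id_minus_seq_compact_operator[OF K])
  obtain C where C: "\<And>x. \<exists>y\<in>ker T. norm (x - y) \<le> C * norm (T x)"
    using ker_id_minus_seq_compact_operator_distance_bound[OF K] unfolding T_def by blast
  show ?thesis unfolding closed_sequential_limits T_def[symmetric]
  proof (intro allI impI, elim conjE)
    fix w v assume w: "\<forall>n. w n \<in> range T" and wv: "w \<longlonglongrightarrow> v"
    text \<open>Preimages of \<open>w n\<close> chosen closest to \<open>ker T\<close> are bounded, and compactness of \<open>K\<close>
      gives a convergent subsequence of them.\<close>
    have "\<forall>n. \<exists>x. w n = T x \<and> norm x \<le> C * norm (w n)"
    proof
      fix n
      obtain x where x: "w n = T x" using w by blast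
      then obtain y where y: "y \<in> ker T" "norm (x - y) \<le> C * norm (w n)" using C[of x] by auto
      then have "w n = T (x - y)" using x by (simp add: T.diff)
      then show "\<exists>x. w n = T x \<and> norm x \<le> C * norm (w n)" using y(2) by blast
    qed
    then obtain x where x: "\<And>n. T (x n) = w n" "\<And>n. norm (x n) \<le> C * norm (w n)" by metis
    obtain B where B: "\<And>n. norm (w n) \<le> B"
      using convergent_imp_bounded[OF wv] unfolding bounded_iff by auto
    have "norm (x n) \<le> \<bar>C\<bar> * B" for n
    proof -
      have "norm (x n) \<le> \<bar>C\<bar> * norm (w n)" by (rule order_trans[OF x(2) mult_right_mono[OF abs_ge_self norm_ge_zero]])
      also have "\<dots> \<le> \<bar>C\<bar> * B" using B by (simp add: mult_left_mono)
      finally show ?thesis .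
    qed
    then have "bounded (range x)" unfolding bounded_iff by auto
    from seq_compact_operatorD[OF K this] obtain r l
      where r: "strict_mono r" "(\<lambda>n. K (x (r n))) \<longlonglongrightarrow> l" by blast
    have wr: "(\<lambda>n. w (r n)) \<longlonglongrightarrow> v" using LIMSEQ_subseq_LIMSEQ[OF wv r(1)] by (simp add: o_def)
    have "(\<lambda>n. w (r n) + K (x (r n))) \<longlonglongrightarrow> v + l" by (intro tendsto_add wr r(2))
    moreover have "w n + K (x n) = x n" for n using x(1)[of n] unfolding T_def by (metis diff_add_cancel)
    ultimately have "(\<lambda>n. x (r n)) \<longlonglongrightarrow> v + l" by simp
    from T.tendsto[OF this] have "(\<lambda>n. w (r n)) \<longlonglongrightarrow> T (v + l)" using x(1) by simp
    then have "T (v + l) = v" using LIMSEQ_unique wr by blast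
    then show "v \<in> range T" by (metis rangeI)
  qed
qed

lemma apply_mem_ker_funpow_iff:
  fixes T :: "'a \<Rightarrow> 'a::zero"
  shows "T x \<in> ker (T ^^ k) \<longleftrightarrow> x \<in> ker (T ^^ Suc k)"
  by (simp add: funpow_Suc_right del: funpow.simps)

lemma range_funpow_Suc:
  fixes T :: "'a \<Rightarrow> 'a"
  shows "range (T ^^ Suc k) = T ` range (T ^^ k)"
  by (simp add: image_comp)

lemma ker_funpow_mono:
  fixes T :: "'a::real_vector \<Rightarrow> 'a"
  assumes "linear T" "k \<le> m"
  shows "ker (T ^^ k) \<subseteq> ker (T ^^ m)"
proof
  fix x assume "x \<in> ker (T ^^ k)"
  moreover have "(T ^^ m) x = (T ^^ (m - k)) ((T ^^ k) x)"
    using assms(2) funpow_add[of "m - k" k T] by simp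
  ultimately show "x \<in> ker (T ^^ m)"
    using linear_0[OF linear_funpow[OF assms(1)]] by simp
qed

lemma range_funpow_antimono:
  fixes T :: "'a \<Rightarrow> 'a"
  assumes "k \<le> m" shows "range (T ^^ m) \<subseteq> range (T ^^ k)"
proof
  fix y assume "y \<in> range (T ^^ m)"
  then obtain x where "y = (T ^^ m) x" by blast
  also have "\<dots> = (T ^^ k) ((T ^^ (m - k)) x)" using assms funpow_add[of k "m - k" T] by simp
  finally show "y \<in> range (T ^^ k)" by blast
qed

lemma ker_funpow_stable:
  fixes T :: "'a::real_vector \<Rightarrow> 'a"
  assumes T: "linear T" and p: "ker (T ^^ Suc p) \<subseteq> ker (T ^^ p)" and "p \<le> n"
  shows "ker (T ^^ n) = ker (T ^^ p)"
  using \<open>p \<le> n\<close>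
proof (induction n rule: dec_induct)
  case (step n)
  have "ker (T ^^ Suc n) \<subseteq> ker (T ^^ n)"
  proof
    fix x assume "x \<in> ker (T ^^ Suc n)"
    moreover have "(T ^^ Suc n) x = (T ^^ Suc p) ((T ^^ (n - p)) x)"
      using step(1) funpow_add[of "Suc p" "n - p" T] by (simp del: funpow.simps)
    ultimately have "(T ^^ (n - p)) x \<in> ker (T ^^ p)" using p by auto
    moreover have "(T ^^ n) x = (T ^^ p) ((T ^^ (n - p)) x)"
      using step(1) funpow_add[of p "n - p" T] by simp
    ultimately show "x \<in> ker (T ^^ n)" by simp
  qed
  then show ?case using step(3) ker_funpow_mono[OF T, of n "Suc n"] by auto
qed simp

lemma range_funpow_stable:
  fixes T :: "'a \<Rightarrow> 'a"
  assumes q: "range (T ^^ q) \<subseteq> range (T ^^ Suc q)" and "q \<le> n"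
  shows "range (T ^^ n) = range (T ^^ q)"
  using \<open>q \<le> n\<close>
proof (induction n rule: dec_induct)
  case (step n)
  have "range (T ^^ Suc n) = T ` range (T ^^ q)" by (simp only: range_funpow_Suc step(3))
  also have "\<dots> = range (T ^^ Suc q)" by (simp only: range_funpow_Suc)
  also have "\<dots> = range (T ^^ q)" using q range_funpow_antimono[of q "Suc q" T] by auto
  finally show ?case .
qed simp

lemma ker_range_direct_sum:
  assumes S: "linear S" and ker: "ker (S \<circ> S) = ker S" and range: "range (S \<circ> S) = range S"
  shows "ker S \<inter> range S = {0}" "\<forall>x. \<exists>a\<in>ker S. \<exists>b\<in>range S. x = a + b"
proof -
  have "x = 0" if x: "x \<in> ker S" "x \<in> range S" for x
  proof -
    obtain a where a: "x = S a" using x(2) by blast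
    then have "a \<in> ker (S \<circ> S)" using x(1) by simp
    then show "x = 0" using ker a by simp
  qed
  then show "ker S \<inter> range S = {0}" using linear_0[OF S] by auto
  show "\<forall>x. \<exists>a\<in>ker S. \<exists>b\<in>range S. x = a + b"
  proof
    fix x
    have "S x \<in> range (S \<circ> S)" using range by auto
    then obtain c where c: "S x = S (S c)" by auto
    then have "x - S c \<in> ker S" using linear_diff[OF S] by simp
    then show "\<exists>a\<in>ker S. \<exists>b\<in>range S. x = a + b" by (metis diff_add_cancel rangeI)
  qed
qed

text \<open>Rank-nullity for \<open>T\<close> on the finite-dimensional part \<open>N\<close>, while \<open>T\<close> is onto on \<open>R\<close>.\<close>
lemma has_codim_range_of_invariant_decomposition:
  assumes T: "linear T" and N: "subspace N" "fin_dim N" "T ` N \<subseteq> N" "ker T \<subseteq> N"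
    and R: "T ` R = R"
    and direct: "N \<inter> R = {0}" and sum: "\<forall>x. \<exists>a\<in>N. \<exists>b\<in>R. x = a + b"
  shows "has_codim (range T) (dim (ker T))"
proof -
  define W where "W = T ` N"
  have "subspace W" unfolding W_def using linear_subspace_image[OF T N(1)] .
  then obtain C where C: "subspace C" "fin_dim C" "C \<subseteq> N" "W \<inter> C = {0}"
    "\<forall>x\<in>N. \<exists>w\<in>W. \<exists>c\<in>C. x = w + c" "dim N = dim W + dim C"
    using subspace_complement_exists[OF _ N(1) N(3)[folded W_def] N(2)] by metis
  have "N \<inter> ker T = ker T" using N(4) by blast
  then have "dim N = dim (ker T) + dim W"
    using rank_nullity_subspace[OF T N(1,2)] unfolding W_def by simp
  then have dim_C: "dim C = dim (ker T)" using C(6) by simp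
  have "range T \<inter> C \<subseteq> {0}"
  proof
    fix v assume v: "v \<in> range T \<inter> C"
    then obtain x where x: "v = T x" by auto
    obtain a b where ab: "a \<in> N" "b \<in> R" "x = a + b" using sum by blast
    have "T b = v - T a" using x ab(3) linear_add[OF T] by simp
    moreover have "v \<in> N" "T a \<in> N" using v C(3) N(3) ab(1) by auto
    ultimately have "T b \<in> N" using N(1) by (simp add: subspace_diff)
    moreover have "T b \<in> R" using R ab(2) by blast
    ultimately have "T b = 0" using direct by blast
    then have "v \<in> W" using x ab linear_add[OF T] unfolding W_def by auto
    then show "v \<in> {0}" using C(4) v by auto
  qed
  moreover have "0 \<in> range T \<inter> C" using linear_0[OF T] subspace_0[OF C(1)] by (metis IntI rangeI)
  moreover have "\<forall>x. \<exists>v\<in>range T. \<exists>c\<in>C. x = v + c"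
  proof
    fix x
    obtain a b where ab: "a \<in> N" "b \<in> R" "x = a + b" using sum by blast
    obtain w c where wc: "w \<in> W" "c \<in> C" "a = w + c" using C(5) ab(1) by blast
    obtain a' where a': "w = T a'" using wc(1) unfolding W_def by auto
    obtain b' where b': "b = T b'" using ab(2) R by (metis imageE)
    have "x = T (a' + b') + c" using ab(3) wc(3) a' b' linear_add[OF T] by (simp add: algebra_simps)
    then show "\<exists>v\<in>range T. \<exists>c\<in>C. x = v + c" using wc(2) by blast
  qed
  ultimately show ?thesis unfolding has_codim_def using subspace_range[OF T] C(1,2) dim_C by blast
qed

lemma closed_ker_range_funpow_id_minus_seq_compact_operator:
  fixes K :: "'a::real_normed_vector \<Rightarrow> 'a"
  assumes K: "seq_compact_operator K"
  shows "closed (ker ((\<lambda>x. x - K x) ^^ k))" "closed (range ((\<lambda>x. x - K x) ^^ k))"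
proof -
  obtain K' where K': "seq_compact_operator K'" "(\<lambda>x. x - K x) ^^ k = (\<lambda>x. x - K' x)"
    using funpow_id_minus_seq_compact_operator[OF K] by blast
  show "closed (ker ((\<lambda>x. x - K x) ^^ k))"
    unfolding K'(2) by (rule closed_ker[OF bounded_linear_id_minus_seq_compact_operator[OF K'(1)]])
  show "closed (range ((\<lambda>x. x - K x) ^^ k))"
    unfolding K'(2) by (rule closed_range_id_minus_seq_compact_operator[OF K'(1)])
qed

text \<open>Ascent and descent of \<open>I - K\<close> are finite: a strictly monotone chain of closed subspaces
  would, by the Riesz lemma, yield a bounded sequence whose image under \<open>K\<close> is \<open>1/2\<close>-separated.\<close>
lemma ascent_id_minus_seq_compact_operator:
  fixes K :: "'a::real_normed_vector \<Rightarrow> 'a"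
  assumes K: "seq_compact_operator K"
  defines "T \<equiv> \<lambda>x. x - K x"
  shows "\<exists>p. ker (T ^^ Suc p) \<subseteq> ker (T ^^ p)"
proof (rule ccontr)
  assume "\<nexists>p. ker (T ^^ Suc p) \<subseteq> ker (T ^^ p)"
  then have new: "\<exists>x. x \<in> ker (T ^^ Suc k) \<and> x \<notin> ker (T ^^ k)" for k by blast
  have T: "linear T"
    unfolding T_def using bounded_linear_id_minus_seq_compact_operator[OF K] bounded_linear.linear by blast
  have N: "subspace (ker (T ^^ k))" "closed (ker (T ^^ k))" for k
    using subspace_ker[OF linear_funpow[OF T]] closed_ker_range_funpow_id_minus_seq_compact_operator[OF K]
    unfolding T_def by auto
  have "\<exists>z. norm z = 1 \<and> z \<in> ker (T ^^ Suc k) \<and> (\<forall>y\<in>ker (T ^^ k). 1/2 \<le> norm (z - y))" for k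
  proof -
    obtain x where x: "x \<in> ker (T ^^ Suc k)" "x \<notin> ker (T ^^ k)" using new by blast
    then obtain y0 d where y0: "y0 \<in> ker (T ^^ k)" "d = norm (x - y0)" "0 < d"
      and far: "\<forall>y\<in>ker (T ^^ k). 1/2 \<le> norm ((1/d) *\<^sub>R (x - y0) - y)"
      using riesz_lemma[OF N] by blast
    have "y0 \<in> ker (T ^^ Suc k)" using y0(1) ker_funpow_mono[OF T, of k "Suc k"] by auto
    then have "(1/d) *\<^sub>R (x - y0) \<in> ker (T ^^ Suc k)"
      using x(1) by (intro subspace_scale[OF N(1)] subspace_diff[OF N(1)])
    moreover have "norm ((1/d) *\<^sub>R (x - y0)) = 1" using y0(2,3) by simp
    ultimately show ?thesis using far by blast
  qed
  then obtain z where z: "\<And>k. norm (z k) = 1" "\<And>k. z k \<in> ker (T ^^ Suc k)"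
    "\<And>k. \<forall>y\<in>ker (T ^^ k). 1/2 \<le> norm (z k - y)" by metis
  show False
  proof (rule seq_compact_operator_no_separated_sequence[OF K z(1)])
    fix k m :: nat assume "k < m"
    have "z k \<in> ker (T ^^ m)"
      using z(2)[of k] ker_funpow_mono[OF T Suc_leI[OF \<open>k < m\<close>]] by blast
    moreover have "T (z k) \<in> ker (T ^^ m)"
      using z(2)[of k] apply_mem_ker_funpow_iff[of T "z k" k]
        ker_funpow_mono[OF T less_imp_le[OF \<open>k < m\<close>]] by blast
    moreover have "T (z m) \<in> ker (T ^^ m)" using z(2)[of m] apply_mem_ker_funpow_iff by blast
    ultimately have "T (z m) + z k - T (z k) \<in> ker (T ^^ m)"
      by (intro subspace_diff[OF N(1)] subspace_add[OF N(1)])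
    moreover have "K (z m) - K (z k) = z m - (T (z m) + z k - T (z k))"
      unfolding T_def by (simp add: algebra_simps)
    ultimately show "1/2 \<le> norm (K (z m) - K (z k))" using z(3) by metis
  qed
qed

lemma descent_id_minus_seq_compact_operator:
  fixes K :: "'a::real_normed_vector \<Rightarrow> 'a"
  assumes K: "seq_compact_operator K"
  defines "T \<equiv> \<lambda>x. x - K x"
  shows "\<exists>q. range (T ^^ q) \<subseteq> range (T ^^ Suc q)"
proof (rule ccontr)
  assume "\<nexists>q. range (T ^^ q) \<subseteq> range (T ^^ Suc q)"
  then have new: "\<exists>x. x \<in> range (T ^^ k) \<and> x \<notin> range (T ^^ Suc k)" for k by blast
  have T: "linear T"
    unfolding T_def using bounded_linear_id_minus_seq_compact_operator[OF K] bounded_linear.linear by blast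
  have R: "subspace (range (T ^^ k))" "closed (range (T ^^ k))" for k
    using subspace_range[OF linear_funpow[OF T]] closed_ker_range_funpow_id_minus_seq_compact_operator[OF K]
    unfolding T_def by auto
  have "\<exists>z. norm z = 1 \<and> z \<in> range (T ^^ k) \<and> (\<forall>y\<in>range (T ^^ Suc k). 1/2 \<le> norm (z - y))" for k
  proof -
    obtain x where x: "x \<in> range (T ^^ k)" "x \<notin> range (T ^^ Suc k)" using new by blast
    then obtain y0 d where y0: "y0 \<in> range (T ^^ Suc k)" "d = norm (x - y0)" "0 < d"
      and far: "\<forall>y\<in>range (T ^^ Suc k). 1/2 \<le> norm ((1/d) *\<^sub>R (x - y0) - y)"
      using riesz_lemma[OF R] by blast
    have "y0 \<in> range (T ^^ k)" using y0(1) range_funpow_antimono[of k "Suc k" T] by auto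
    then have "(1/d) *\<^sub>R (x - y0) \<in> range (T ^^ k)"
      using x(1) by (intro subspace_scale[OF R(1)] subspace_diff[OF R(1)])
    moreover have "norm ((1/d) *\<^sub>R (x - y0)) = 1" using y0(2,3) by simp
    ultimately show ?thesis using far by blast
  qed
  then obtain z where z: "\<And>k. norm (z k) = 1" "\<And>k. z k \<in> range (T ^^ k)"
    "\<And>k. \<forall>y\<in>range (T ^^ Suc k). 1/2 \<le> norm (z k - y)" by metis
  show False
  proof (rule seq_compact_operator_no_separated_sequence[OF K z(1)])
    fix k m :: nat assume "k < m"
    have T_range: "T (z j) \<in> range (T ^^ Suc j)" for j
      using z(2) range_funpow_Suc[of j T] by blast
    have "z m \<in> range (T ^^ Suc k)" using z(2) range_funpow_antimono[of "Suc k" m T] \<open>k < m\<close> by auto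
    moreover have "T (z m) \<in> range (T ^^ Suc k)"
      using T_range range_funpow_antimono[of "Suc k" "Suc m" T] \<open>k < m\<close> by auto
    ultimately have "T (z k) + z m - T (z m) \<in> range (T ^^ Suc k)"
      using T_range by (intro subspace_diff[OF R(1)] subspace_add[OF R(1)])
    moreover have "K (z k) - K (z m) = z k - (T (z k) + z m - T (z m))"
      unfolding T_def by (simp add: algebra_simps)
    ultimately have "1/2 \<le> norm (K (z k) - K (z m))" using z(3) by metis
    then show "1/2 \<le> norm (K (z m) - K (z k))" by (simp add: norm_minus_commute)
  qed
qed

theorem riesz_schauder:
  fixes K :: "'a::real_normed_vector \<Rightarrow> 'a"
  assumes K: "seq_compact_operator K"
  defines "T \<equiv> \<lambda>x. x - K x"
  shows "fin_dim (ker T)" "closed (range T)" "has_codim (range T) (dim (ker T))"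
proof -
  show "fin_dim (ker T)" unfolding T_def by (rule fin_dim_ker_id_minus_seq_compact_operator[OF K])
  show "closed (range T)" unfolding T_def by (rule closed_range_id_minus_seq_compact_operator[OF K])
  have T: "linear T"
    unfolding T_def using bounded_linear_id_minus_seq_compact_operator[OF K] bounded_linear.linear by blast
  obtain p where p: "ker (T ^^ Suc p) \<subseteq> ker (T ^^ p)"
    using ascent_id_minus_seq_compact_operator[OF K] unfolding T_def by blast
  obtain q where q: "range (T ^^ q) \<subseteq> range (T ^^ Suc q)"
    using descent_id_minus_seq_compact_operator[OF K] unfolding T_def by blast
  define m where "m = Suc (p + q)"
  have "p \<le> m" "q \<le> m" "Suc 0 \<le> m" unfolding m_def by simp_all
  have ker_stable: "ker (T ^^ n) = ker (T ^^ m)" if "m \<le> n" for n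
    using ker_funpow_stable[OF T p order_trans[OF \<open>p \<le> m\<close> that]]
      ker_funpow_stable[OF T p \<open>p \<le> m\<close>] by simp
  have range_stable: "range (T ^^ n) = range (T ^^ m)" if "m \<le> n" for n
    using range_funpow_stable[OF q order_trans[OF \<open>q \<le> m\<close> that]]
      range_funpow_stable[OF q \<open>q \<le> m\<close>] by simp
  have ker_m: "ker (T ^^ Suc m) = ker (T ^^ m)" "ker (T ^^ (m + m)) = ker (T ^^ m)"
    and range_m: "range (T ^^ Suc m) = range (T ^^ m)" "range (T ^^ (m + m)) = range (T ^^ m)"
    using ker_stable[of "Suc m"] ker_stable[of "m + m"] range_stable[of "Suc m"] range_stable[of "m + m"]
    by simp_all
  have square: "T ^^ m \<circ> T ^^ m = T ^^ (m + m)" by (simp add: funpow_add)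
  have "ker (T ^^ m \<circ> T ^^ m) = ker (T ^^ m)" unfolding square by (rule ker_m(2))
  moreover have "range (T ^^ m \<circ> T ^^ m) = range (T ^^ m)" unfolding square by (rule range_m(2))
  ultimately have direct: "ker (T ^^ m) \<inter> range (T ^^ m) = {0}"
    and sum: "\<forall>x. \<exists>a\<in>ker (T ^^ m). \<exists>b\<in>range (T ^^ m). x = a + b"
    using ker_range_direct_sum[OF linear_funpow[OF T]] by blast+
  obtain K' where K': "seq_compact_operator K'" "T ^^ m = (\<lambda>x. x - K' x)"
    using funpow_id_minus_seq_compact_operator[OF K] unfolding T_def by blast
  have fin_dim: "fin_dim (ker (T ^^ m))"
    unfolding K'(2) by (rule fin_dim_ker_id_minus_seq_compact_operator[OF K'(1)])
  have N_invariant: "T ` ker (T ^^ m) \<subseteq> ker (T ^^ m)"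
    using apply_mem_ker_funpow_iff[of T _ m] ker_m(1) by blast
  have "ker (T ^^ Suc 0) \<subseteq> ker (T ^^ m)" by (rule ker_funpow_mono[OF T \<open>Suc 0 \<le> m\<close>])
  then have ker_sub: "ker T \<subseteq> ker (T ^^ m)" by simp
  have R_invariant: "T ` range (T ^^ m) = range (T ^^ m)"
    using range_funpow_Suc[of m T] range_m(1) by (simp del: funpow.simps)
  show "has_codim (range T) (dim (ker T))"
    by (rule has_codim_range_of_invariant_decomposition[OF T subspace_ker[OF linear_funpow[OF T]]
          fin_dim N_invariant ker_sub R_invariant direct sum])
qed

section \<open>The perturbed identity\<close>

lemma Tsol_eq_iff:
  fixes Da A :: "'e1::real_normed_vector \<Rightarrow>\<^sub>L 'e0::real_normed_vector"
    and g0 :: "'e1 \<Rightarrow>\<^sub>L 'es::real_normed_vector"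
  assumes "bij (\<lambda>\<phi>. (Da \<phi> + A \<phi>, g0 \<phi>))"
  shows "Tsol Da g0 A p = \<phi> \<longleftrightarrow> (Da \<phi> + A \<phi>, g0 \<phi>) = p"
  using bij_inv_eq_iff[OF assms, of \<phi> p] unfolding Tsol_def by metis

lemma Tsol_solves:
  fixes Da A :: "'e1::real_normed_vector \<Rightarrow>\<^sub>L 'e0::real_normed_vector"
    and g0 :: "'e1 \<Rightarrow>\<^sub>L 'es::real_normed_vector"
  assumes "bij (\<lambda>\<phi>. (Da \<phi> + A \<phi>, g0 \<phi>))"
  shows "Da (Tsol Da g0 A (f, w)) + A (Tsol Da g0 A (f, w)) = f" "g0 (Tsol Da g0 A (f, w)) = w"
  using Tsol_eq_iff[OF assms, of "(f, w)"] by auto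

lemma ker_perturbed_identity:
  fixes Da A0 Au :: "'e1::real_normed_vector \<Rightarrow>\<^sub>L 'e0::real_normed_vector"
    and g0 :: "'e1 \<Rightarrow>\<^sub>L 'es::real_normed_vector"
  assumes bij0: "bij (\<lambda>\<phi>. (Da \<phi> + A0 \<phi>, g0 \<phi>))" and biju: "bij (\<lambda>\<phi>. (Da \<phi> + Au \<phi>, g0 \<phi>))"
  shows "ker (\<lambda>\<phi>. \<phi> - Tsol Da g0 A0 ((A0 - Au) \<phi>, B \<phi>))
    = (\<lambda>w. Tsol Da g0 Au (0, w)) ` ker (\<lambda>w. w - B (Tsol Da g0 Au (0, w)))"
proof
  show "ker (\<lambda>\<phi>. \<phi> - Tsol Da g0 A0 ((A0 - Au) \<phi>, B \<phi>))
    \<subseteq> (\<lambda>w. Tsol Da g0 Au (0, w)) ` ker (\<lambda>w. w - B (Tsol Da g0 Au (0, w)))"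
  proof
    fix \<phi> assume "\<phi> \<in> ker (\<lambda>\<phi>. \<phi> - Tsol Da g0 A0 ((A0 - Au) \<phi>, B \<phi>))"
    then have "Tsol Da g0 A0 ((A0 - Au) \<phi>, B \<phi>) = \<phi>" by simp
    then have "Da \<phi> + A0 \<phi> = A0 \<phi> - Au \<phi>" and g0: "g0 \<phi> = B \<phi>"
      unfolding Tsol_eq_iff[OF bij0] by (auto simp: blinfun.diff_left)
    then have "Tsol Da g0 Au (0, g0 \<phi>) = \<phi>" unfolding Tsol_eq_iff[OF biju] by (simp add: algebra_simps)
    with g0 show "\<phi> \<in> (\<lambda>w. Tsol Da g0 Au (0, w)) ` ker (\<lambda>w. w - B (Tsol Da g0 Au (0, w)))"
      by (metis (mono_tags, lifting) diff_self image_eqI mem_ker)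
  qed
  show "(\<lambda>w. Tsol Da g0 Au (0, w)) ` ker (\<lambda>w. w - B (Tsol Da g0 Au (0, w)))
    \<subseteq> ker (\<lambda>\<phi>. \<phi> - Tsol Da g0 A0 ((A0 - Au) \<phi>, B \<phi>))"
  proof
    fix \<phi> assume "\<phi> \<in> (\<lambda>w. Tsol Da g0 Au (0, w)) ` ker (\<lambda>w. w - B (Tsol Da g0 Au (0, w)))"
    then obtain w where w: "w = B \<phi>" "\<phi> = Tsol Da g0 Au (0, w)" by auto
    then have "Da \<phi> + Au \<phi> = 0" "g0 \<phi> = w" using Tsol_solves[OF biju] by auto
    then have "Tsol Da g0 A0 ((A0 - Au) \<phi>, B \<phi>) = \<phi>"
      unfolding Tsol_eq_iff[OF bij0] using w(1) by (simp add: blinfun.diff_left algebra_simps eq_neg_iff_add_eq_0)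
    then show "\<phi> \<in> ker (\<lambda>\<phi>. \<phi> - Tsol Da g0 A0 ((A0 - Au) \<phi>, B \<phi>))" by simp
  qed
qed

text \<open>Writing \<open>h = \<phi> - \<psi>\<close> with \<open>\<psi> = T[A\<^sub>0](\<dots>)\<close>, one finds \<open>(\<partial> + A\<^sub>0) h = (\<partial> + A\<^sub>u) \<phi>\<close>, so
  \<open>\<phi> = T[A\<^sub>u]((\<partial> + A\<^sub>0) h, 0) + T[A\<^sub>u](0, \<phi>(0))\<close>; the initial value of \<open>h\<close> then encodes the range
  condition.\<close>
lemma range_perturbed_identity:
  fixes Da A0 Au :: "'e1::real_normed_vector \<Rightarrow>\<^sub>L 'e0::real_normed_vector"
    and g0 :: "'e1 \<Rightarrow>\<^sub>L 'es::real_normed_vector"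
  assumes bij0: "bij (\<lambda>\<phi>. (Da \<phi> + A0 \<phi>, g0 \<phi>))" and biju: "bij (\<lambda>\<phi>. (Da \<phi> + Au \<phi>, g0 \<phi>))"
    and Tu: "linear (Tsol Da g0 Au)" and B: "linear B"
  shows "range (\<lambda>\<phi>. \<phi> - Tsol Da g0 A0 ((A0 - Au) \<phi>, B \<phi>))
    = {h. g0 h + B (Tsol Da g0 Au (Da h + A0 h, 0)) \<in> range (\<lambda>w. w - B (Tsol Da g0 Au (0, w)))}"
proof -
  define P where "P w = w - B (Tsol Da g0 Au (0, w))" for w
  have B_split: "B (Tsol Da g0 Au (f, w)) = B (Tsol Da g0 Au (f, 0)) + B (Tsol Da g0 Au (0, w))" for f w
    using linear_add[OF Tu, of "(f, 0)" "(0, w)"] linear_add[OF B] by simp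
  have "g0 h + B (Tsol Da g0 Au (Da h + A0 h, 0)) \<in> range P"
    if "h = \<phi> - Tsol Da g0 A0 ((A0 - Au) \<phi>, B \<phi>)" for h \<phi>
  proof -
    define \<psi> where "\<psi> = Tsol Da g0 A0 ((A0 - Au) \<phi>, B \<phi>)"
    have \<psi>: "Da \<psi> + A0 \<psi> = A0 \<phi> - Au \<phi>" "g0 \<psi> = B \<phi>"
      using Tsol_solves[OF bij0] unfolding \<psi>_def by (auto simp: blinfun.diff_left)
    have "Da h + A0 h = Da \<phi> + Au \<phi>"
      using \<psi>(1) unfolding that \<psi>_def[symmetric] by (simp add: blinfun.diff_right algebra_simps)
    then have \<phi>: "Tsol Da g0 Au (Da h + A0 h, g0 \<phi>) = \<phi>" unfolding Tsol_eq_iff[OF biju] by simp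
    have "g0 h + B (Tsol Da g0 Au (Da h + A0 h, 0)) = g0 \<phi> - B \<phi> + B (Tsol Da g0 Au (Da h + A0 h, 0))"
      using \<psi>(2) unfolding that \<psi>_def[symmetric] by (simp add: blinfun.diff_right)
    also have "\<dots> = P (g0 \<phi>)"
      unfolding P_def using B_split[of "Da h + A0 h" "g0 \<phi>"] \<phi> by (simp add: algebra_simps)
    finally show ?thesis by simp
  qed
  moreover have "h \<in> range (\<lambda>\<phi>. \<phi> - Tsol Da g0 A0 ((A0 - Au) \<phi>, B \<phi>))"
    if "g0 h + B (Tsol Da g0 Au (Da h + A0 h, 0)) = P w" for h w
  proof -
    define \<phi> where "\<phi> = Tsol Da g0 Au (Da h + A0 h, w)"
    have \<phi>: "Da \<phi> + Au \<phi> = Da h + A0 h" "g0 \<phi> = w"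
      using Tsol_solves[OF biju] unfolding \<phi>_def by auto
    have "g0 h = w - B \<phi>"
      using that B_split[of "Da h + A0 h" w] unfolding P_def \<phi>_def by (simp add: algebra_simps)
    then have "Tsol Da g0 A0 ((A0 - Au) \<phi>, B \<phi>) = \<phi> - h"
      unfolding Tsol_eq_iff[OF bij0] using \<phi> by (simp add: blinfun.diff_left blinfun.diff_right algebra_simps)
    then have "h = \<phi> - Tsol Da g0 A0 ((A0 - Au) \<phi>, B \<phi>)" by simp
    then show ?thesis by blast
  qed
  ultimately show ?thesis unfolding P_def[symmetric] by blast
qed

lemma fredholm_index0_transfer:
  fixes F :: "'a::banach \<Rightarrow> 'b::banach"
  assumes F: "bounded_linear F"
    and P: "linear P" "fin_dim (ker P)" "closed (range P)" "has_codim (range P) (dim (ker P))"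
    and J: "linear J" "inj_on J (ker P)" and ker: "ker F = J ` ker P"
    and Phi: "bounded_linear Phi" "linear L" "\<And>w. Phi (L w) = w" and range: "range F = Phi -` range P"
  shows "fredholm_index0 F" "dim (ker F) = dim (ker P)"
proof -
  show dim: "dim (ker F) = dim (ker P)"
    unfolding ker by (rule dim_linear_image_inj_on[OF J(1) subspace_ker[OF P(1)] J(2)])
  have "fin_dim (ker F)" unfolding ker by (rule fin_dim_linear_image[OF J(1) P(2)])
  moreover have "closed (range F)"
    unfolding range using continuous_closed_vimage[OF P(3)] linear_continuous_at[OF Phi(1)] by blast
  moreover have "has_codim (range F) (dim (ker F))"
    unfolding range dim by (rule has_codim_linear_vimage[OF bounded_linear.linear[OF Phi(1)] Phi(2,3) P(4)])
  ultimately show "fredholm_index0 F" unfolding fredholm_index0_def using F by blast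
qed

lemma fredholm_index0_perturbed_identity:
  fixes Da A0 Au :: "'e1::banach \<Rightarrow>\<^sub>L 'e0::real_normed_vector"
    and g0 :: "'e1 \<Rightarrow>\<^sub>L 'es::real_normed_vector" and B :: "'e1 \<Rightarrow> 'es"
  assumes bij0: "bij (\<lambda>\<phi>. (Da \<phi> + A0 \<phi>, g0 \<phi>))" and T0: "bounded_linear (Tsol Da g0 A0)"
    and biju: "bij (\<lambda>\<phi>. (Da \<phi> + Au \<phi>, g0 \<phi>))" and Tu: "bounded_linear (Tsol Da g0 Au)"
    and B: "bounded_linear B" and compact: "seq_compact_operator (\<lambda>w. B (Tsol Da g0 Au (0, w)))"
  defines "F \<equiv> \<lambda>\<phi>. \<phi> - Tsol Da g0 A0 ((A0 - Au) \<phi>, B \<phi>)"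
    and "P \<equiv> \<lambda>w. w - B (Tsol Da g0 Au (0, w))"
  shows "bounded_linear F" "fredholm_index0 F" "fin_dim (ker P)" "dim (ker F) = dim (ker P)"
proof -
  define J where "J = (\<lambda>w. Tsol Da g0 Au (0, w))"
  define Phi where "Phi = (\<lambda>h. g0 h + B (Tsol Da g0 Au (Da h + A0 h, 0)))"
  define L where "L = (\<lambda>w. Tsol Da g0 A0 (0, w))"
  have J: "bounded_linear J" unfolding J_def
    by (intro bounded_linear_compose[OF Tu] bounded_linear_Pair bounded_linear_zero bounded_linear_ident)
  have P: "fin_dim (ker P)" "closed (range P)" "has_codim (range P) (dim (ker P))"
    unfolding P_def by (rule riesz_schauder[OF compact])+
  then show "fin_dim (ker P)" by simp
  have linear_P: "linear P"
    unfolding P_def using bounded_linear_sub[OF bounded_linear_ident bounded_linear_compose[OF B J]]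
    by (simp add: J_def bounded_linear.linear)
  show F: "bounded_linear F" unfolding F_def
    by (intro bounded_linear_sub bounded_linear_ident bounded_linear_compose[OF T0]
        bounded_linear_Pair blinfun.bounded_linear_right B)
  have ker: "ker F = J ` ker P"
    unfolding F_def P_def J_def by (rule ker_perturbed_identity[OF bij0 biju])
  have range: "range F = Phi -` range P"
    unfolding F_def P_def Phi_def vimage_def
    by (rule range_perturbed_identity[OF bij0 biju bounded_linear.linear[OF Tu] bounded_linear.linear[OF B]])
  have "inj_on J (ker P)"
  proof (rule inj_onI)
    fix v w assume "J v = J w"
    then have "g0 (J v) = g0 (J w)" by simp
    then show "v = w" unfolding J_def Tsol_solves(2)[OF biju] .
  qed
  moreover have "bounded_linear (\<lambda>h. Tsol Da g0 Au (Da h + A0 h, 0))"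
    by (intro bounded_linear_compose[OF Tu] bounded_linear_Pair bounded_linear_add
        blinfun.bounded_linear_right bounded_linear_zero)
  then have "bounded_linear Phi" unfolding Phi_def
    by (intro bounded_linear_add blinfun.bounded_linear_right bounded_linear_compose[OF B])
  moreover have "linear L" unfolding L_def
    by (intro bounded_linear.linear bounded_linear_compose[OF T0] bounded_linear_Pair
        bounded_linear_zero bounded_linear_ident)
  moreover have "Phi (L w) = w" for w
  proof -
    have "Tsol Da g0 Au (0, 0) = 0" using Tsol_eq_iff[OF biju] by (simp add: blinfun.zero_right)
    then show ?thesis
      unfolding Phi_def L_def using Tsol_solves[OF bij0] linear_0[OF bounded_linear.linear[OF B]]
      by (simp add: blinfun.zero_right)
  qed
  ultimately show "fredholm_index0 F" "dim (ker F) = dim (ker P)"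
    by (rule fredholm_index0_transfer[OF F linear_P P bounded_linear.linear[OF J] _ ker _ _ _ range])+
qed

theorem proposition2p2:
  fixes iota :: "'e1::banach \<Rightarrow>\<^sub>L 'f::banach"
    and j :: "'ev::banach \<Rightarrow>\<^sub>L 'es::banach"
    and Da :: "'e1 \<Rightarrow>\<^sub>L 'e0::banach"
    and g0 :: "'e1 \<Rightarrow>\<^sub>L 'es"
    and Sig :: "'f set"
    and A :: "'f \<Rightarrow> ('e1 \<Rightarrow>\<^sub>L 'e0)"
    and l :: "'f \<Rightarrow> ('e1 \<Rightarrow>\<^sub>L 'ev)"
    and Ks :: "'es set" and K1 :: "'e1 set"
    and lam0 :: real and Phi0 :: 'es
    and lam :: real and u :: 'e1
  assumes iota_emb: "inj iota" "compact_operator iota"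
    and j_emb: "inj j" "compact_operator j"
    and Sig: "open Sig" "connected Sig" "0 \<in> Sig"
    and A_C1: "C1_on Sig A" and l_C1: "C1_on Sig l"
    and iso: "\<And>v. iota v \<in> Sig \<Longrightarrow>
        bij (\<lambda>\<phi>. (Da \<phi> + A (iota v) \<phi>, g0 \<phi>)) \<and> bounded_linear (Tsol Da g0 (A (iota v)))"
    and cone_Ks: "closed Ks" "convex Ks" "cone Ks" "interior Ks \<noteq> {}"
    and pos: "\<And>v w. iota v \<in> Sig \<Longrightarrow> w \<in> Ks \<Longrightarrow> Tsol Da g0 (A (iota v)) (0, w) \<in> K1"
    and lam0: "lam0 > 0" "Phi0 \<in> interior Ks"
    and eig: "Qop j Da g0 (A 0) (l 0) Phi0 = (1 / lam0) *\<^sub>R Phi0"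
    and simple: "ker (\<lambda>w. (1 / lam0) *\<^sub>R w - Qop j Da g0 (A 0) (l 0) w) = span {Phi0}"
      "ker (\<lambda>w. (\<lambda>z. (1 / lam0) *\<^sub>R z - Qop j Da g0 (A 0) (l 0) z)
                 ((1 / lam0) *\<^sub>R w - Qop j Da g0 (A 0) (l 0) w)) = span {Phi0}"
    and no_other: "\<And>mu v. v \<in> Ks \<Longrightarrow> v \<noteq> 0 \<Longrightarrow> Qop j Da g0 (A 0) (l 0) v = mu *\<^sub>R v \<Longrightarrow> mu = 1 / lam0"
    and u: "iota u \<in> Sig"
  defines "F \<equiv> (\<lambda>\<phi>. \<phi> - Tsol Da g0 (A 0) ((A 0 - A (iota u)) \<phi>, lam *\<^sub>R j (l (iota u) \<phi>)))"
  shows "bounded_linear F \<and> fredholm_index0 F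
    \<and> ker F = (\<lambda>w. Tsol Da g0 (A (iota u)) (0, w)) ` ker (\<lambda>w. w - lam *\<^sub>R Qop j Da g0 (A (iota u)) (l (iota u)) w)
    \<and> range F = {h. g0 h + lam *\<^sub>R j (l (iota u) (Tsol Da g0 (A (iota u)) (Da h + A 0 h, 0))) \<in> range (\<lambda>w. w - lam *\<^sub>R Qop j Da g0 (A (iota u)) (l (iota u)) w)}
    \<and> fin_dim (ker (\<lambda>w. w - lam *\<^sub>R Qop j Da g0 (A (iota u)) (l (iota u)) w))
    \<and> dim (ker F) = dim (ker (\<lambda>w. w - lam *\<^sub>R Qop j Da g0 (A (iota u)) (l (iota u)) w))
    \<and> has_codim (range F) (dim (ker (\<lambda>w. w - lam *\<^sub>R Qop j Da g0 (A (iota u)) (l (iota u)) w)))"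
proof -
  have bij0: "bij (\<lambda>\<phi>. (Da \<phi> + A 0 \<phi>, g0 \<phi>))" and T0: "bounded_linear (Tsol Da g0 (A 0))"
    using iso[of 0] Sig(3) by (simp_all add: blinfun.zero_right)
  have biju: "bij (\<lambda>\<phi>. (Da \<phi> + A (iota u) \<phi>, g0 \<phi>))"
    and Tu: "bounded_linear (Tsol Da g0 (A (iota u)))" using iso[OF u] by simp_all
  define B where "B = (\<lambda>\<phi>. lam *\<^sub>R j (l (iota u) \<phi>))"
  have B: "bounded_linear B" unfolding B_def by (intro bounded_linear_intros)
  have "seq_compact_operator (\<lambda>w. j (l (iota u) (Tsol Da g0 (A (iota u)) (0, w))))"
    by (intro seq_compact_operator_compose_right[OF compact_operator_imp_seq_compact_operator[OF j_emb(2)]]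
        bounded_linear_compose[OF blinfun.bounded_linear_right] bounded_linear_compose[OF Tu]
        bounded_linear_Pair bounded_linear_zero bounded_linear_ident)
  then have "seq_compact_operator (\<lambda>w. B (Tsol Da g0 (A (iota u)) (0, w)))"
    unfolding B_def by (rule seq_compact_operator_compose_left) (rule bounded_linear_scaleR_right)
  note fredholm = fredholm_index0_perturbed_identity[OF bij0 T0 biju Tu B this]
  have F_eq: "F = (\<lambda>\<phi>. \<phi> - Tsol Da g0 (A 0) ((A 0 - A (iota u)) \<phi>, B \<phi>))"
    unfolding F_def B_def ..
  show ?thesis
    using fredholm ker_perturbed_identity[OF bij0 biju, of B]
      range_perturbed_identity[OF bij0 biju bounded_linear.linear[OF Tu] bounded_linear.linear[OF B]]
    unfolding F_eq fredholm_index0_def Qop_def B_def by auto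
qed

end
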